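(* Let $\mathcal{M}$ be a set of mappings and $q(\vec x)\leftarrow L_1(\vec v_1),\dots,L_n(\vec v_n)$ a conjunctive query such that all rows of the answer template matrix of $\mathrm{unf}(q,\mathrm{wrap}(\mathcal{M}))$ are equal to some tuple $\vec f$ of function symbols. Let $L_i(\vec v_i)$ be an atom of $q$ with $\vec v_i\subseteq\vec x$ (as sets of variables). Then for every pair of rules $$r_1=q_u(\vec f(\vec y))\leftarrow V_1(\vec y_1),\dots,V_i(\vec y_i),\dots,V_n(\vec y_n),\qquad r_2=q'_u(\vec f(\vec y'))\leftarrow V'_1(\vec y'_1),\dots,V'_i(\vec y'_i),\dots,V'_n(\vec y'_n)$$ in the program of $\mathrm{unf}(q,\mathrm{wrap}(\mathcal{M}))$, where the $j$-th body atom comes from the mapping matched with $L_j$, it holds that $V_i=V'_i$.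
   Context: A mapping is $L(\vec f(\vec x))\leftsquigarrow V(\vec x)$ with $L$ a concept or role name, $\vec f(\vec x)$ a tuple of terms each of the form $g(\vec y)$ ($g$ a function symbol, $\vec y\subseteq\vec x$), and $V$ a view name. Signature: $\mathrm{sign}(m)=(L,\vec f)$. Unfolding of a CQ $q(\vec x)\leftarrow L_1(\vec v_1),\dots,L_n(\vec v_n)$: the non-recursive Datalog query $(q_{\mathrm{unf}}(\vec x),\Pi)$ where $\Pi$ is a minimal (up to renaming) set of rules containing, for every tuple $(m_1,\dots,m_n)$ of mappings with $m_i=L_i(\vec f_i(\vec x_i))\leftsquigarrow V_i(\vec z_i)$ and every mgu $\sigma$ of $\{(L_i(\vec v_i),L_i(\vec f_i(\vec x_i)))\}$, the rule $q_{\mathrm{unf}}(\sigma(\vec x))\leftarrow V_1(\sigma(\vec z_1)),\dots,V_n(\sigma(\vec z_n))$. Wrap: for each signature $(L,\vec f)$, the mappings of that signature $\{L(\vec f(\vec v_i))\leftsquigarrow V_i(\vec v_i)\}_i$ are replaced by the single mapping $L(\vec f(\vec v))\leftsquigarrow W(\vec v)$ with $W$ a fresh view for $(W(\vec v),\{W(\vec v_i)\leftarrow V_i(\vec v_i)\}_i)$; $\mathrm{wrap}(\mathcal{M})$ is the union over all signatures (so it contains at most one mapping per signature). Answer template matrix: if the rules of an unfolding are $q_{\mathrm{unf}}(\vec f_j(\vec y_j))\leftarrow V^j_1,\dots,V^j_n$ for $1\le j\le m$, where $\vec f_j$ is the tuple of function symbols in the head, its rows are $\vec f_1,\dots,\vec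 f_m$. *)

theory Defs
  imports Main
begin

datatype ('f, 'v) trm = Var 'v | Fn 'f "('f, 'v) trm list"

fun subst :: "('v \<Rightarrow> ('f, 'u) trm) \<Rightarrow> ('f, 'v) trm \<Rightarrow> ('f, 'u) trm" where
  "subst \<sigma> (Var v) = \<sigma> v"
| "subst \<sigma> (Fn g ts) = Fn g (map (subst \<sigma>) ts)"

definition unifier :: "('v \<Rightarrow> ('f, 'v) trm) \<Rightarrow> (('f, 'v) trm \<times> ('f, 'v) trm) set \<Rightarrow> bool" where
  "unifier \<sigma> E \<longleftrightarrow> (\<forall>(s, t) \<in> E. subst \<sigma> s = subst \<sigma> t)"

definition is_mgu :: "('v \<Rightarrow> ('f, 'v) trm) \<Rightarrow> (('f, 'v) trm \<times> ('f, 'v) trm) set \<Rightarrow> bool" where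
  "is_mgu \<sigma> E \<longleftrightarrow> unifier \<sigma> E \<and>
     (\<forall>\<tau>. unifier \<tau> E \<longrightarrow> (\<exists>\<rho>. \<forall>v. \<tau> v = subst \<rho> (\<sigma> v)))"

text \<open>A mapping  L(g_1(y_1),...,g_k(y_k)) ~> V(z) : concept/role name L, a tuple of
  terms g_j(y_j) (function symbol + argument variables), a view name V and its
  argument variables z.\<close>

record ('c, 'f, 'w, 'v) mapping =
  m_pred :: 'c
  m_terms :: "('f \<times> 'v list) list"
  m_view :: 'w
  m_args :: "'v list"

definition wf_mapping :: "('f \<Rightarrow> nat) \<Rightarrow> ('c, 'f, 'w, 'v) mapping \<Rightarrow> bool" where
  "wf_mapping ar m \<longleftrightarrow>
     (\<forall>(g, ys) \<in> set (m_terms m). length ys = ar g \<and> set ys \<subseteq> set (m_args m))"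

definition sign :: "('c, 'f, 'w, 'v) mapping \<Rightarrow> 'c \<times> 'f list" where
  "sign m = (m_pred m, map fst (m_terms m))"

text \<open>Wrapping: for each signature (L, f) there is a single mapping
  L(f(v)) ~> W(v) with v fresh distinct variables; the fresh view W is named by
  (identified with) the signature itself, so distinct signatures get distinct
  fresh views.  Variables of the wrapped mapping: (j,k) = k-th argument of j-th term.\<close>
definition wrap_mapping :: "('f \<Rightarrow> nat) \<Rightarrow> 'c \<times> 'f list
    \<Rightarrow> ('c, 'f, 'c \<times> 'f list, nat \<times> nat) mapping" where
  "wrap_mapping ar s =
     (let ts = map (\<lambda>(j, g). (g, map (\<lambda>k. (j, k)) [0..<ar g])) (enumerate 0 (snd s))
      in \<lparr> m_pred = fst s, m_terms = ts, m_view = s, m_args = concat (map snd ts) \<rparr>)"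

definition wrap :: "('f \<Rightarrow> nat) \<Rightarrow> ('c, 'f, 'w, 'v) mapping set
    \<Rightarrow> ('c, 'f, 'c \<times> 'f list, nat \<times> nat) mapping set" where
  "wrap ar M = wrap_mapping ar ` (sign ` M)"

text \<open>A CQ q(x) <- L_1(v_1),...,L_n(v_n): head variable list and list of body atoms.
  Safety: head variables occur in the body.\<close>
type_synonym ('c, 'v) cq = "'v list \<times> ('c \<times> 'v list) list"

definition wf_cq :: "('c, 'v) cq \<Rightarrow> bool" where
  "wf_cq q \<longleftrightarrow> set (fst q) \<subseteq> (\<Union>(L, vs) \<in> set (snd q). set vs)"

text \<open>Datalog rule q_unf(head) <- V_1(args_1),...,V_n(args_n).\<close>
type_synonym ('f, 'w, 'x) rule = "('f, 'x) trm list \<times> ('w \<times> ('f, 'x) trm list) list"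

text \<open>Variables of the unification problem: query variables (Inl) and the variables
  of the i-th mapping of the tuple (Inr (i, y)); this renames the mappings apart.\<close>
definition unif_problem :: "('c, 'v) cq \<Rightarrow> ('c, 'f, 'w, 'u) mapping list
    \<Rightarrow> (('f, 'v + nat \<times> 'u) trm \<times> ('f, 'v + nat \<times> 'u) trm) set" where
  "unif_problem q ms =
     {(Var (Inl (snd (snd q ! i) ! k)),
       Fn (fst (m_terms (ms ! i) ! k)) (map (\<lambda>y. Var (Inr (i, y))) (snd (m_terms (ms ! i) ! k))))
      | i k. i < length (snd q) \<and> k < length (snd (snd q ! i))}"

text \<open>The program of unf(q, M): all rules obtained from a tuple of mappings
  (m_1,...,m_n) with m_i matched to atom L_i(v_i) and an mgu \<sigma> of the atom pairs.
  (The set is closed under renaming.)\<close>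
definition unf_program :: "('c, 'v) cq \<Rightarrow> ('c, 'f, 'w, 'u) mapping set
    \<Rightarrow> ('f, 'w, 'v + nat \<times> 'u) rule set" where
  "unf_program q M =
     {(map (\<lambda>x. \<sigma> (Inl x)) (fst q),
       map (\<lambda>i. (m_view (ms ! i), map (\<lambda>z. \<sigma> (Inr (i, z))) (m_args (ms ! i))))
           [0..<length (snd q)])
      | ms \<sigma>. length ms = length (snd q) \<and> set ms \<subseteq> M \<and>
         (\<forall>i < length (snd q). m_pred (ms ! i) = fst (snd q ! i) \<and>
              length (m_terms (ms ! i)) = length (snd (snd q ! i))) \<and>
         is_mgu \<sigma> (unif_problem q ms)}"

fun head_sym :: "('f, 'v) trm \<Rightarrow> 'f option" where
  "head_sym (Fn g _) = Some g"
| "head_sym (Var _) = None"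

definition template_row :: "('f, 'w, 'x) rule \<Rightarrow> 'f option list" where
  "template_row r = map head_sym (fst r)"

end

theory Submission
  imports Defs
begin

text \<open>In a rule of unf(q, wrap(M)) the i-th body view is the signature of the wrapped
  mapping matched with L_i(v_i), i.e. L_i together with the function symbols the mgu puts
  on the variables v_i.  When v_i consists of answer variables, these are head symbols
  of the rule, which the answer template matrix fixes to the entries of f.  Hence the
  view depends only on q and f, not on the rule.\<close>

lemma m_view_wrap_mapping: "m_view (wrap_mapping ar s) = s"
  by (simp add: wrap_mapping_def Let_def)

lemma sign_wrap_mapping: "sign (wrap_mapping ar s) = s"
proof -
  have "map fst (map (\<lambda>(j, g). (g, map (\<lambda>k. (j, k)) [0..<ar g])) (enumerate n gs)) = gs"
    for n gs
    by (induction gs arbitrary: n) auto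
  then show ?thesis
    by (simp add: sign_def wrap_mapping_def Let_def)
qed

lemma m_view_eq_sign_if_wrapped: "m \<in> wrap ar M \<Longrightarrow> m_view m = sign m"
  unfolding wrap_def by (auto simp: m_view_wrap_mapping sign_wrap_mapping)

lemma unf_programE:
  assumes "r \<in> unf_program q M"
  obtains ms \<sigma> where
    "r = (map (\<lambda>x. \<sigma> (Inl x)) (fst q),
          map (\<lambda>i. (m_view (ms ! i), map (\<lambda>z. \<sigma> (Inr (i, z))) (m_args (ms ! i))))
              [0..<length (snd q)])"
    "length ms = length (snd q)" "set ms \<subseteq> M"
    "\<forall>i < length (snd q). m_pred (ms ! i) = fst (snd q ! i) \<and>
        length (m_terms (ms ! i)) = length (snd (snd q ! i))"
    "is_mgu \<sigma> (unif_problem q ms)"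
  using assms unfolding unf_program_def by blast

lemma head_sym_unifier_query_var:
  assumes "unifier \<sigma> (unif_problem q ms)"
    and "i < length (snd q)" and "k < length (snd (snd q ! i))"
  shows "head_sym (\<sigma> (Inl (snd (snd q ! i) ! k))) = Some (fst (m_terms (ms ! i) ! k))"
proof -
  have "(Var (Inl (snd (snd q ! i) ! k)),
         Fn (fst (m_terms (ms ! i) ! k)) (map (\<lambda>y. Var (Inr (i, y))) (snd (m_terms (ms ! i) ! k))))
        \<in> unif_problem q ms"
    unfolding unif_problem_def using assms(2,3) by blast
  then show ?thesis
    using assms(1) unfolding unifier_def by fastforce
qed

lemma head_sym_from_template_row:
  assumes "template_row r = map Some f" and "fst r = map g xs" and "j < length xs"
  shows "head_sym (g (xs ! j)) = Some (f ! j)"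
proof -
  have row: "map head_sym (map g xs) = map Some f"
    using assms(1,2) unfolding template_row_def by simp
  then have "length xs = length f"
    by (metis length_map)
  have "head_sym (g (xs ! j)) = map head_sym (map g xs) ! j"
    using assms(3) by simp
  also have "\<dots> = map Some f ! j"
    by (simp only: row)
  also have "\<dots> = Some (f ! j)"
    using assms(3) \<open>length xs = length f\<close> by simp
  finally show ?thesis .
qed

lemma unf_program_wrap_view:
  assumes r: "r \<in> unf_program q (wrap ar M)"
    and row: "template_row r = map Some f"
    and i: "i < length (snd q)"
    and answer_vars: "set (snd (snd q ! i)) \<subseteq> set (fst q)"
  shows "fst (snd r ! i) = (fst (snd q ! i),
           map (\<lambda>v. f ! (SOME j. j < length (fst q) \<and> fst q ! j = v)) (snd (snd q ! i)))"
proof -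
  let ?vs = "snd (snd q ! i)"
  obtain ms \<sigma> where r_def:
      "r = (map (\<lambda>x. \<sigma> (Inl x)) (fst q),
            map (\<lambda>i. (m_view (ms ! i), map (\<lambda>z. \<sigma> (Inr (i, z))) (m_args (ms ! i))))
                [0..<length (snd q)])"
    and len: "length ms = length (snd q)" and wrapped: "set ms \<subseteq> wrap ar M"
    and matched: "\<forall>i < length (snd q). m_pred (ms ! i) = fst (snd q ! i) \<and>
        length (m_terms (ms ! i)) = length (snd (snd q ! i))"
    and mgu: "is_mgu \<sigma> (unif_problem q ms)"
    using r by (rule unf_programE)
  have answer_terms: "fst r = map (\<lambda>x. \<sigma> (Inl x)) (fst q)"
    using r_def by simp
  have "ms ! i \<in> wrap ar M"
    using wrapped len i by (metis nth_mem subsetD)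
  then have view: "fst (snd r ! i) = sign (ms ! i)"
    using r_def i by (simp add: m_view_eq_sign_if_wrapped)
  have "fst (m_terms (ms ! i) ! k) = f ! (SOME j. j < length (fst q) \<and> fst q ! j = ?vs ! k)"
    if k: "k < length ?vs" for k
  proof -
    define j where "j = (SOME j. j < length (fst q) \<and> fst q ! j = ?vs ! k)"
    have "\<exists>j. j < length (fst q) \<and> fst q ! j = ?vs ! k"
      using answer_vars k by (metis in_set_conv_nth nth_mem subsetD)
    then have j: "j < length (fst q) \<and> fst q ! j = ?vs ! k"
      unfolding j_def by (rule someI_ex)
    have "head_sym (\<sigma> (Inl (?vs ! k))) = Some (fst (m_terms (ms ! i) ! k))"
      using mgu i k by (simp add: is_mgu_def head_sym_unifier_query_var)
    moreover have "head_sym (\<sigma> (Inl (fst q ! j))) = Some (f ! j)"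
      using head_sym_from_template_row[OF row answer_terms conjunct1[OF j]] by simp
    ultimately show ?thesis
      using j j_def by simp
  qed
  then have "map fst (m_terms (ms ! i)) =
      map (\<lambda>v. f ! (SOME j. j < length (fst q) \<and> fst q ! j = v)) ?vs"
    using matched i by (intro nth_equalityI) auto
  then show ?thesis
    using view matched i by (simp add: sign_def)
qed

theorem theorem7:
  fixes ar :: "'f \<Rightarrow> nat"
    and M :: "('c, 'f, 'w, 'v) mapping set"
    and q :: "('c, 'v) cq"
    and f :: "'f list"
    and i :: nat
  assumes "\<forall>m \<in> M. wf_mapping ar m"
    and "wf_cq q"
    and "\<forall>r \<in> unf_program q (wrap ar M). template_row r = map Some f"
    and "i < length (snd q)"
    and "set (snd (snd q ! i)) \<subseteq> set (fst q)"
  shows "\<forall>r1 \<in> unf_program q (wrap ar M). \<forall>r2 \<in> unf_program q (wrap ar M).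
           fst (snd r1 ! i) = fst (snd r2 ! i)"
proof (intro ballI)
  fix r1 r2
  assume r1: "r1 \<in> unf_program q (wrap ar M)" and r2: "r2 \<in> unf_program q (wrap ar M)"
  show "fst (snd r1 ! i) = fst (snd r2 ! i)"
    using unf_program_wrap_view[OF r1 _ assms(4,5)] unf_program_wrap_view[OF r2 _ assms(4,5)]
      assms(3) r1 r2 by simp
qed

end
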